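(* For integers $s,t\ge0$ let $m_{i,j}^{s,t}=\int_{(0,1)^2}\frac{x^{s+i}y^{s+j}}{x+y}\left(\frac{1-x}{1+x}\right)^t\left(\frac{1-y}{1+y}\right)^tdx\,dy$, $\phi_i^{s,t}=\sqrt2\int_0^1\frac{x^{s+i}}{1+x}\left(\frac{1-x}{1+x}\right)^tdx$, $\tau_n^{s,t}=\det(m_{i,j}^{s,t})_{i,j=0}^{n-1}$, $\xi_n^{s,t}=\det(m_{i,j+1}^{s,t})_{i,j=0}^{n-1}$ (with $\tau_0^{s,t}=\xi_0^{s,t}=1$), and $$\sigma_n^{s,t}=\det\begin{pmatrix} m_{0,0}^{s,t}&\cdots&m_{0,n-1}^{s,t}&\phi_0^{s,t}\\ \vdots&&\vdots&\vdots\\ m_{n,0}^{s,t}&\cdots&m_{n,n-1}^{s,t}&\phi_n^{s,t}\end{pmatrix}\quad(n\ge0).$$ Then for all $s,t\ge0$: (a) for all $n\ge0$, $\ \tau_{n+1}^{s,t+1}\tau_{n}^{s,t}-\tau_{n}^{s,t+1}\tau_{n+1}^{s,t}=-\big(\sigma_{n}^{s,t}\big)^2$; (b) for all $n\ge1$, $\ \tau_n^{s,t}\tau_{n}^{s+1,t+1}-\tau_{n+1}^{s,t}\tau_{n-1}^{s+1,t+1}=\xi_n^{s,t+1}\xi_n^{s,t}-\sigma_{n-1}^{s+1,t}\sigma_n^{s,t}$.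
   Context: Empty determinants equal $1$; for $n=0$, $\sigma_0^{s,t}=\phi_0^{s,t}$. *)

theory Defs
  imports "HOL-Analysis.Analysis" "Jordan_Normal_Form.Determinant"
begin

definition mom :: "nat \<Rightarrow> nat \<Rightarrow> nat \<Rightarrow> nat \<Rightarrow> real" where
  "mom s t i j = (LINT p : {0<..<1} \<times> {0<..<1} | (lborel :: (real \<times> real) measure).
      (fst p) ^ (s + i) * (snd p) ^ (s + j) / (fst p + snd p)
      * ((1 - fst p) / (1 + fst p)) ^ t * ((1 - snd p) / (1 + snd p)) ^ t)"

definition phi :: "nat \<Rightarrow> nat \<Rightarrow> nat \<Rightarrow> real" where
  "phi s t i = sqrt 2 * (LINT x : {0<..<1} | lborel. x ^ (s + i) / (1 + x) * ((1 - x) / (1 + x)) ^ t)"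

definition tau :: "nat \<Rightarrow> nat \<Rightarrow> nat \<Rightarrow> real" where
  "tau s t n = det (mat n n (\<lambda>(i, j). mom s t i j))"

definition xi :: "nat \<Rightarrow> nat \<Rightarrow> nat \<Rightarrow> real" where
  "xi s t n = det (mat n n (\<lambda>(i, j). mom s t i (j + 1)))"

definition sigma_det :: "nat \<Rightarrow> nat \<Rightarrow> nat \<Rightarrow> real" where
  "sigma_det s t n = det (mat (n + 1) (n + 1)
      (\<lambda>(i, j). if j = n then phi s t i else mom s t i j))"

end

theory Submission
  imports Defs "Jordan_Normal_Form.Char_Poly"
begin

text \<open>Raising \<open>t\<close> by one replaces the moment matrix \<open>m\<close> by the rank-one downdate \<open>m - \<phi> \<phi>\<^sup>T\<close>,
  and raising \<open>s\<close> shifts its rows and columns by one, so both identities are statements about a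
  symmetric matrix \<open>M\<close> and a vector \<open>\<phi>\<close>. Border \<open>M\<close> by \<open>\<phi>\<close> in a new row and column with corner
  entry \<open>1\<close>; the Schur complement of that corner is \<open>M - \<phi> \<phi>\<^sup>T\<close>, so every determinant in the
  statement is a minor of this single bordered matrix. Identity (a) is Sylvester's determinant identity
  for it, and (b) is a three-term relation between its minors, which follows from four instances of
  Sylvester's identity.\<close>

section \<open>Minors and Sylvester's identity\<close>

abbreviation lead_minor :: "(nat \<Rightarrow> nat \<Rightarrow> 'a::comm_ring_1) \<Rightarrow> nat \<Rightarrow> 'a" where
  "lead_minor F n \<equiv> det (mat n n (\<lambda>(i, j). F i j))"

definition minor :: "(nat \<Rightarrow> nat \<Rightarrow> 'a::comm_ring_1) \<Rightarrow> (nat \<Rightarrow> nat) \<Rightarrow> (nat \<Rightarrow> nat) \<Rightarrow> nat \<Rightarrow> 'a" where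
  "minor F r c n = det (mat n n (\<lambda>(i, j). F (r i) (c j)))"

lemma lead_minor_cong:
  "(\<And>i j. i < n \<Longrightarrow> j < n \<Longrightarrow> F i j = G i j) \<Longrightarrow> lead_minor F n = lead_minor G n"
  by (intro arg_cong[where f = det] eq_matI) auto

lemma minor_eq_lead_minor:
  "(\<And>i j. i < n \<Longrightarrow> j < n \<Longrightarrow> F (r i) (c j) = G i j) \<Longrightarrow> minor F r c n = lead_minor G n"
  unfolding minor_def by (rule lead_minor_cong)

lemma minor_cong:
  "(\<And>i. i < n \<Longrightarrow> r i = r' i) \<Longrightarrow> (\<And>j. j < n \<Longrightarrow> c j = c' j) \<Longrightarrow> minor F r c n = minor F r' c' n"
  unfolding minor_def by (rule lead_minor_cong) auto

lemma lead_minor_transpose: "lead_minor F n = lead_minor (\<lambda>i j. F j i) n"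
proof -
  have "lead_minor F n = det (transpose_mat (mat n n (\<lambda>(i, j). F i j)))"
    by (rule det_transpose[symmetric]) auto
  also have "transpose_mat (mat n n (\<lambda>(i, j). F i j)) = mat n n (\<lambda>(i, j). F j i)"
    by (rule eq_matI) auto
  finally show ?thesis .
qed

lemma minor_permute_rows:
  assumes "p permutes {0..<n}"
  shows "minor F (r \<circ> p) c n = signof p * minor F r c n"
proof -
  have "minor F (r \<circ> p) c n = det (mat n n (\<lambda>(i, j). mat n n (\<lambda>(i, j). F (r i) (c j)) $$ (p i, j)))"
    unfolding minor_def using assms by (intro arg_cong[where f = det] eq_matI) (auto simp: permutes_in_image)
  also have "\<dots> = signof p * minor F r c n"
    unfolding minor_def by (rule det_permute_rows[OF _ assms]) auto
  finally show ?thesis .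
qed

lemma minor_permute_cols:
  assumes "p permutes {0..<n}"
  shows "minor F r (c \<circ> p) n = signof p * minor F r c n"
  using minor_permute_rows[OF assms, of "\<lambda>i j. F j i" c r]
  unfolding minor_def by (subst (1 2) lead_minor_transpose) simp

lemma minor_permute_both:
  assumes "p permutes {0..<n}"
  shows "minor F (r \<circ> p) (c \<circ> p) n = minor F r c n"
proof -
  have "signof p * signof p = (1 :: 'a)"
    by (cases p rule: sign_cases) auto
  then show ?thesis
    by (simp add: minor_permute_rows[OF assms] minor_permute_cols[OF assms] mult.assoc[symmetric])
qed

lemma det_mat_2: "det (mat 2 2 f) = f (0, 0) * f (1, 1) - f (0, 1) * (f (1, 0) :: 'a :: comm_ring_1)"
proof -
  have "mat 2 2 f \<in> carrier_mat 2 2" by auto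
  then show ?thesis
    by (subst laplace_expansion_row[of _ _ 0])
      (auto simp: numeral_2_eq_2 cofactor_def mat_delete_def det_single lessThan_Suc)
qed

lemma det_four_block_mat_adj:
  fixes A :: "'a::idom mat"
  assumes A: "A \<in> carrier_mat k k" and B: "B \<in> carrier_mat k m"
    and C: "C \<in> carrier_mat m k" and D: "D \<in> carrier_mat m m"
  shows "det (four_block_mat A B C D) * det A ^ m = det A * det (det A \<cdot>\<^sub>m D - C * (adj_mat A * B))"
proof -
  define d where "d = det A"
  define N where "N = four_block_mat (1\<^sub>m k) (- (adj_mat A * B)) (0\<^sub>m m k) (d \<cdot>\<^sub>m 1\<^sub>m m)"
  have adj: "adj_mat A \<in> carrier_mat k k" and AB: "adj_mat A * B \<in> carrier_mat k m"
    using adj_mat[OF A] B by auto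
  have N: "N \<in> carrier_mat (k + m) (k + m)" unfolding N_def using AB by auto
  have det_N: "det N = d ^ m"
    unfolding N_def by (subst det_four_block_mat_lower_left_zero[of _ k _ m]) (use AB in \<open>auto simp: det_smult\<close>)
  have "A * (adj_mat A * B) = (A * adj_mat A) * B" using assoc_mult_mat[OF A adj B] by simp
  also have "\<dots> = d \<cdot>\<^sub>m B" using adj_mat[OF A] B by (simp add: d_def mult_smult_assoc_mat[of _ k k])
  finally have upper_right: "A * (- (adj_mat A * B)) + B * (d \<cdot>\<^sub>m 1\<^sub>m m) = 0\<^sub>m k m"
    using A B adj by (intro eq_matI) auto
  have "C * (- (adj_mat A * B)) = - (C * (adj_mat A * B))" and "D * (d \<cdot>\<^sub>m 1\<^sub>m m) = d \<cdot>\<^sub>m D"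
    using C D AB by (auto simp: mult_smult_distrib[OF D one_carrier_mat])
  then have lower_right: "C * (- (adj_mat A * B)) + D * (d \<cdot>\<^sub>m 1\<^sub>m m) = d \<cdot>\<^sub>m D - C * (adj_mat A * B)"
    using C D AB by (intro eq_matI) auto
  have "four_block_mat A B C D * N = four_block_mat (A * 1\<^sub>m k + B * 0\<^sub>m m k)
      (A * (- (adj_mat A * B)) + B * (d \<cdot>\<^sub>m 1\<^sub>m m)) (C * 1\<^sub>m k + D * 0\<^sub>m m k)
      (C * (- (adj_mat A * B)) + D * (d \<cdot>\<^sub>m 1\<^sub>m m))"
    unfolding N_def by (rule mult_four_block_mat[OF A B C D]) (use AB in auto)
  also have "\<dots> = four_block_mat A (0\<^sub>m k m) C (d \<cdot>\<^sub>m D - C * (adj_mat A * B))"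
    unfolding upper_right lower_right using A B C D by simp
  finally have product: "four_block_mat A B C D * N = four_block_mat A (0\<^sub>m k m) C (d \<cdot>\<^sub>m D - C * (adj_mat A * B))" .
  have "det (four_block_mat A B C D) * det N = det (four_block_mat A B C D * N)"
    by (rule det_mult[symmetric]) (use A B C D N in auto)
  also have "\<dots> = det A * det (d \<cdot>\<^sub>m D - C * (adj_mat A * B))"
    unfolding product using C AB by (intro det_four_block_mat_upper_right_zero[OF A refl C] minus_carrier_mat) auto
  finally show ?thesis unfolding det_N d_def .
qed

text \<open>\<open>schur_entry F k p q\<close> is \<open>det A\<close> times the \<open>(p, q)\<close> entry of the Schur complement of
  the leading \<open>k \<times> k\<close> block \<open>A\<close> of \<open>F\<close>.\<close>

definition schur_entry :: "(nat \<Rightarrow> nat \<Rightarrow> 'a::comm_ring_1) \<Rightarrow> nat \<Rightarrow> nat \<Rightarrow> nat \<Rightarrow> 'a" where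
  "schur_entry F k p q = lead_minor F k * F p q
     - (\<Sum>i<k. F p i * (\<Sum>j<k. adj_mat (mat k k (\<lambda>(i, j). F i j)) $$ (i, j) * F j q))"

lemma det_mult_lead_minor_power:
  fixes F :: "nat \<Rightarrow> nat \<Rightarrow> 'a::idom"
  shows "lead_minor F (k + m) * lead_minor F k ^ m
       = lead_minor F k * det (mat m m (\<lambda>(a, b). schur_entry F k (k + a) (k + b)))"
proof -
  define A where "A = mat k k (\<lambda>(i, j). F i j)"
  define B where "B = mat k m (\<lambda>(i, j). F i (k + j))"
  define C where "C = mat m k (\<lambda>(i, j). F (k + i) j)"
  define D where "D = mat m m (\<lambda>(i, j). F (k + i) (k + j))"
  have A: "A \<in> carrier_mat k k" and B: "B \<in> carrier_mat k m" and C: "C \<in> carrier_mat m k"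
    and D: "D \<in> carrier_mat m m" and adj: "adj_mat A \<in> carrier_mat k k"
    unfolding A_def B_def C_def D_def by (auto intro: adj_mat)
  have "mat (k + m) (k + m) (\<lambda>(i, j). F i j) = four_block_mat A B C D"
    by (rule eq_matI) (auto simp: A_def B_def C_def D_def)
  moreover have "det A \<cdot>\<^sub>m D - C * (adj_mat A * B) = mat m m (\<lambda>(a, b). schur_entry F k (k + a) (k + b))"
  proof (rule eq_matI)
    fix a b assume "a < dim_row (mat m m (\<lambda>(a, b). schur_entry F k (k + a) (k + b)))"
      and "b < dim_col (mat m m (\<lambda>(a, b). schur_entry F k (k + a) (k + b)))"
    then have a: "a < m" and b: "b < m" by auto
    have "(C * (adj_mat A * B)) $$ (a, b) = (\<Sum>i<k. F (k + a) i * (\<Sum>j<k. adj_mat A $$ (i, j) * F j (k + b)))"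
      using a b C B adj by (auto simp: scalar_prod_def C_def B_def atLeast0LessThan intro!: sum.cong)
    then show "(det A \<cdot>\<^sub>m D - C * (adj_mat A * B)) $$ (a, b) = mat m m (\<lambda>(a, b). schur_entry F k (k + a) (k + b)) $$ (a, b)"
      using a b C B D adj by (simp add: schur_entry_def A_def D_def)
  qed (use C B adj in auto)
  ultimately show ?thesis
    using det_four_block_mat_adj[OF A B C D] by (simp add: A_def)
qed

lemma schur_entry_reindex:
  assumes "\<And>i. i < k \<Longrightarrow> r i = i" and "\<And>j. j < k \<Longrightarrow> c j = j"
  shows "schur_entry (\<lambda>i j. F (r i) (c j)) k p q = schur_entry F k (r p) (c q)"
proof -
  have "mat k k (\<lambda>(i, j). F (r i) (c j)) = mat k k (\<lambda>(i, j). F i j)"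
    using assms by (intro eq_matI) auto
  then show ?thesis
    unfolding schur_entry_def using assms by (auto intro!: sum.cong)
qed

definition border_index :: "nat \<Rightarrow> nat \<Rightarrow> nat \<Rightarrow> nat" where
  "border_index k p i = (if i = k then p else i)"

definition border_index2 :: "nat \<Rightarrow> nat \<Rightarrow> nat \<Rightarrow> nat \<Rightarrow> nat" where
  "border_index2 k a b i = (if i = k then a else if i = Suc k then b else i)"

abbreviation bordered_minor :: "(nat \<Rightarrow> nat \<Rightarrow> 'a::comm_ring_1) \<Rightarrow> nat \<Rightarrow> nat \<Rightarrow> nat \<Rightarrow> 'a" where
  "bordered_minor F k p q \<equiv> minor F (border_index k p) (border_index k q) (Suc k)"

abbreviation bordered_minor2 ::
    "(nat \<Rightarrow> nat \<Rightarrow> 'a::comm_ring_1) \<Rightarrow> nat \<Rightarrow> nat \<Rightarrow> nat \<Rightarrow> nat \<Rightarrow> nat \<Rightarrow> 'a" where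
  "bordered_minor2 F k a b c d \<equiv> minor F (border_index2 k a b) (border_index2 k c d) (k + 2)"

lemma bordered_minor_eq_schur_entry:
  fixes F :: "nat \<Rightarrow> nat \<Rightarrow> 'a::idom"
  assumes "lead_minor F k \<noteq> 0"
  shows "bordered_minor F k p q = schur_entry F k p q"
proof -
  define G where "G = (\<lambda>i j. F (border_index k p i) (border_index k q j))"
  have "lead_minor G k = lead_minor F k"
    unfolding G_def by (rule lead_minor_cong) (simp add: border_index_def)
  moreover have "schur_entry G k k k = schur_entry F k p q"
    unfolding G_def by (subst schur_entry_reindex) (simp_all add: border_index_def)
  ultimately show ?thesis using det_mult_lead_minor_power[where F = G and k = k and m = 1] assms
    by (simp add: minor_def G_def det_single)
qed

lemma bordered_minor2_eq_schur_entries: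
  fixes F :: "nat \<Rightarrow> nat \<Rightarrow> 'a::idom"
  assumes "lead_minor F k \<noteq> 0"
  shows "lead_minor F k * bordered_minor2 F k a b c d
       = schur_entry F k a c * schur_entry F k b d - schur_entry F k a d * schur_entry F k b c"
proof -
  define G where "G = (\<lambda>i j. F (border_index2 k a b i) (border_index2 k c d j))"
  have "lead_minor G k = lead_minor F k"
    unfolding G_def by (rule lead_minor_cong) (simp add: border_index2_def)
  moreover have "schur_entry G k (k + i) (k + j)
      = schur_entry F k (border_index2 k a b (k + i)) (border_index2 k c d (k + j))" for i j
    unfolding G_def by (subst schur_entry_reindex) (simp_all add: border_index2_def)
  moreover have "lead_minor G (k + 2) = bordered_minor2 F k a b c d"
    by (simp add: minor_def G_def)
  ultimately have "lead_minor F k * (lead_minor F k * bordered_minor2 F k a b c d)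
      = lead_minor F k * (schur_entry F k a c * schur_entry F k b d - schur_entry F k a d * schur_entry F k b c)"
    using det_mult_lead_minor_power[where F = G and k = k and m = 2]
    by (simp add: det_mat_2 power2_eq_square border_index2_def mult_ac)
  with assms show ?thesis by simp
qed

lemma sylvester_identity_nonsingular:
  fixes F :: "nat \<Rightarrow> nat \<Rightarrow> 'a::idom"
  assumes "lead_minor F k \<noteq> 0"
  shows "lead_minor F k * bordered_minor2 F k a b c d
       = bordered_minor F k a c * bordered_minor F k b d - bordered_minor F k a d * bordered_minor F k b c"
  by (simp only: bordered_minor2_eq_schur_entries[OF assms] bordered_minor_eq_schur_entry[OF assms])

lemma bordered_minor_three_term_nonsingular:
  fixes F :: "nat \<Rightarrow> nat \<Rightarrow> 'a::idom"
  assumes "lead_minor F k \<noteq> 0"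
  shows "bordered_minor F k a a * bordered_minor2 F k b c b c - bordered_minor2 F k a b a b * bordered_minor F k c c
       = bordered_minor2 F k a c b c * bordered_minor F k b a - bordered_minor2 F k a b a c * bordered_minor F k c b"
proof -
  note sylvester = sylvester_identity_nonsingular[OF assms]
  let ?d = "lead_minor F k"
  have "?d * (bordered_minor F k a a * bordered_minor2 F k b c b c
        - bordered_minor2 F k a b a b * bordered_minor F k c c)
      = bordered_minor F k a a * (?d * bordered_minor2 F k b c b c)
        - (?d * bordered_minor2 F k a b a b) * bordered_minor F k c c"
    by (simp add: algebra_simps)
  also have "\<dots> = (?d * bordered_minor2 F k a c b c) * bordered_minor F k b a
        - (?d * bordered_minor2 F k a b a c) * bordered_minor F k c b"
    unfolding sylvester by (simp add: algebra_simps)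
  also have "\<dots> = ?d * (bordered_minor2 F k a c b c * bordered_minor F k b a
        - bordered_minor2 F k a b a c * bordered_minor F k c b)"
    by (simp add: algebra_simps)
  finally have "?d * (bordered_minor F k a a * bordered_minor2 F k b c b c
        - bordered_minor2 F k a b a b * bordered_minor F k c c)
      = ?d * (bordered_minor2 F k a c b c * bordered_minor F k b a
        - bordered_minor2 F k a b a c * bordered_minor F k c b)" .
  with assms show ?thesis by simp
qed

text \<open>The nonsingularity hypotheses are removed by passing to \<open>F + x I\<close> over \<open>'a poly\<close>, whose
  leading minors are characteristic polynomials, hence monic, and evaluating at \<open>x = 0\<close>.\<close>

definition diag_shift :: "(nat \<Rightarrow> nat \<Rightarrow> 'a::comm_ring_1) \<Rightarrow> nat \<Rightarrow> nat \<Rightarrow> 'a poly" where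
  "diag_shift F i j = [:F i j:] + (if i = j then [:0, 1:] else 0)"

lemma lead_minor_diag_shift_nonzero: "lead_minor (diag_shift F) k \<noteq> 0"
proof -
  define A where "A = mat k k (\<lambda>(i, j). - F i j)"
  have A: "A \<in> carrier_mat k k" unfolding A_def by auto
  have "mat k k (\<lambda>(i, j). diag_shift F i j) = char_poly_matrix A"
    unfolding char_poly_matrix_def A_def diag_shift_def by (rule eq_matI) auto
  then have "lead_minor (diag_shift F) k = char_poly A" unfolding char_poly_def by simp
  moreover have "coeff (char_poly A) k = 1" using degree_monic_char_poly[OF A] by simp
  ultimately show ?thesis by auto
qed

lemma poly_minor_diag_shift: "poly (minor (diag_shift F) r c n) 0 = minor F r c n"
  unfolding minor_def by (rule poly_det_cong) (auto simp: diag_shift_def)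

theorem sylvester_identity:
  fixes F :: "nat \<Rightarrow> nat \<Rightarrow> 'a::idom"
  shows "lead_minor F k * bordered_minor2 F k a b c d
       = bordered_minor F k a c * bordered_minor F k b d - bordered_minor F k a d * bordered_minor F k b c"
proof -
  have "poly (lead_minor (diag_shift F) k) 0 = lead_minor F k"
    using poly_minor_diag_shift[of F id id k] by (simp add: minor_def)
  then show ?thesis
    using arg_cong[OF sylvester_identity_nonsingular[OF lead_minor_diag_shift_nonzero[where F = F and k = k], of a b c d], of "\<lambda>p. poly p 0"]
    by (simp add: poly_minor_diag_shift)
qed

theorem bordered_minor_three_term:
  fixes F :: "nat \<Rightarrow> nat \<Rightarrow> 'a::idom"
  shows "bordered_minor F k a a * bordered_minor2 F k b c b c - bordered_minor2 F k a b a b * bordered_minor F k c c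
       = bordered_minor2 F k a c b c * bordered_minor F k b a - bordered_minor2 F k a b a c * bordered_minor F k c b"
  using arg_cong[OF bordered_minor_three_term_nonsingular[OF lead_minor_diag_shift_nonzero[where F = F and k = k], of a b c], of "\<lambda>p. poly p 0"]
  by (simp add: poly_minor_diag_shift)

section \<open>Rank-one downdates of symmetric matrices\<close>

definition border_one :: "(nat \<Rightarrow> nat \<Rightarrow> 'a) \<Rightarrow> (nat \<Rightarrow> 'a) \<Rightarrow> (nat \<Rightarrow> 'a) \<Rightarrow> nat \<Rightarrow> nat \<Rightarrow> nat \<Rightarrow> 'a::one"
  where "border_one M v w k i j = (if i < k \<and> j < k then M i j else if i < k then v i else if j < k then w j else 1)"

lemma lead_minor_border_one:
  fixes M :: "nat \<Rightarrow> nat \<Rightarrow> 'a::idom"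
  shows "lead_minor (border_one M v w k) (Suc k) = lead_minor (\<lambda>i j. M i j - v i * w j) k"
proof -
  define A where "A = mat k k (\<lambda>(i, j). M i j)"
  define V where "V = mat k 1 (\<lambda>(i, j). v i)"
  define W where "W = mat 1 k (\<lambda>(i, j). w j)"
  have A: "A \<in> carrier_mat k k" and V: "V \<in> carrier_mat k 1" and W: "W \<in> carrier_mat 1 k"
    unfolding A_def V_def W_def by auto
  have blocks: "mat (Suc k) (Suc k) (\<lambda>(i, j). border_one M v w k i j) = four_block_mat A V W (1\<^sub>m 1)"
    by (rule eq_matI) (auto simp: A_def V_def W_def border_one_def)
  define Y where "Y = four_block_mat (1\<^sub>m k) (0\<^sub>m k 1) (- W) (1\<^sub>m 1)"
  have Y: "Y \<in> carrier_mat (k + 1) (k + 1)" unfolding Y_def using W by auto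
  have det_Y: "det Y = 1"
    unfolding Y_def by (subst det_four_block_mat_upper_right_zero[of _ k _ 1]) (use W in auto)
  have "four_block_mat A V W (1\<^sub>m 1) * Y = four_block_mat (A * 1\<^sub>m k + V * (- W)) (A * 0\<^sub>m k 1 + V * 1\<^sub>m 1)
      (W * 1\<^sub>m k + 1\<^sub>m 1 * (- W)) (W * 0\<^sub>m k 1 + 1\<^sub>m 1 * 1\<^sub>m 1)"
    unfolding Y_def by (rule mult_four_block_mat[OF A V W]) (use W in auto)
  also have "A * 1\<^sub>m k + V * (- W) = mat k k (\<lambda>(i, j). M i j - v i * w j)"
    using A V W by (intro eq_matI) (auto simp: A_def V_def W_def scalar_prod_def)
  also have "W * 1\<^sub>m k + 1\<^sub>m 1 * (- W) = 0\<^sub>m 1 k"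
    using W by (intro eq_matI) auto
  also have "W * 0\<^sub>m k 1 + 1\<^sub>m 1 * 1\<^sub>m 1 = 1\<^sub>m 1"
    using W by (intro eq_matI) auto
  finally have product: "four_block_mat A V W (1\<^sub>m 1) * Y
      = four_block_mat (mat k k (\<lambda>(i, j). M i j - v i * w j)) (A * 0\<^sub>m k 1 + V * 1\<^sub>m 1) (0\<^sub>m 1 k) (1\<^sub>m 1)" .
  have "det (four_block_mat A V W (1\<^sub>m 1)) = det (four_block_mat A V W (1\<^sub>m 1) * Y)"
    using det_mult[OF four_block_carrier_mat[OF A one_carrier_mat] Y] by (simp add: det_Y)
  also have "\<dots> = lead_minor (\<lambda>i j. M i j - v i * w j) k"
    unfolding product by (subst det_four_block_mat_lower_left_zero[of _ k _ 1]) (use A V in auto)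
  finally show ?thesis unfolding blocks .
qed

lemma lead_minor_rank_one_downdate:
  fixes M :: "nat \<Rightarrow> nat \<Rightarrow> 'a::idom"
  assumes sym: "\<And>i j. M i j = M j i"
  shows "lead_minor (\<lambda>i j. M i j - \<phi> i * \<phi> j) (n + 1) * lead_minor M n
       - lead_minor (\<lambda>i j. M i j - \<phi> i * \<phi> j) n * lead_minor M (n + 1)
       = - (det (mat (n + 1) (n + 1) (\<lambda>(i, j). if j = n then \<phi> i else M i j)) ^ 2)"
proof -
  define G where "G = border_one M \<phi> \<phi> (n + 1)"
  have "lead_minor G n = lead_minor M n"
    by (rule lead_minor_cong) (simp add: G_def border_one_def)
  moreover have "bordered_minor2 G n n (n + 1) n (n + 1) = lead_minor G (n + 2)"
    by (rule minor_eq_lead_minor) (simp add: border_index2_def)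
  moreover have "lead_minor G (n + 2) = lead_minor (\<lambda>i j. M i j - \<phi> i * \<phi> j) (n + 1)"
    using lead_minor_border_one[where M = M and v = \<phi> and w = \<phi> and k = "n + 1"] by (simp add: G_def)
  moreover have "bordered_minor G n n n = lead_minor M (Suc n)"
    by (rule minor_eq_lead_minor) (simp add: G_def border_one_def border_index_def)
  moreover have "bordered_minor G n (n + 1) (n + 1) = lead_minor (\<lambda>i j. M i j - \<phi> i * \<phi> j) n"
    unfolding lead_minor_border_one[symmetric]
    by (rule minor_eq_lead_minor) (simp add: G_def border_one_def border_index_def)
  moreover have "bordered_minor G n n (n + 1) = det (mat (Suc n) (Suc n) (\<lambda>(i, j). if j = n then \<phi> i else M i j))"
    by (rule minor_eq_lead_minor) (auto simp: G_def border_one_def border_index_def)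
  moreover have "bordered_minor G n (n + 1) n = det (mat (Suc n) (Suc n) (\<lambda>(i, j). if j = n then \<phi> i else M i j))"
    by (subst lead_minor_transpose, rule minor_eq_lead_minor)
      (auto simp: G_def border_one_def border_index_def sym)
  ultimately show ?thesis
    using sylvester_identity[where F = G and k = n and a = n and b = "n + 1" and c = n and d = "n + 1"] by (simp add: algebra_simps power2_eq_square)
qed

definition rotate_to_front :: "nat \<Rightarrow> nat \<Rightarrow> nat" where
  "rotate_to_front k i = (if i < k then Suc i else if i = k then 0 else i)"

lemma rotate_to_front_permutes:
  assumes "k < n"
  shows "rotate_to_front k permutes {0..<n}"
  unfolding permutes_def
proof (intro conjI allI impI)
  fix i assume "i \<notin> {0..<n}"
  then show "rotate_to_front k i = i" using assms by (auto simp: rotate_to_front_def)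
next
  fix j
  show "\<exists>!i. rotate_to_front k i = j"
    by (rule ex1I[of _ "if j = 0 then k else if j \<le> k then j - 1 else j"])
      (auto simp: rotate_to_front_def split: if_splits)
qed

lemma minor_reindex: "minor (\<lambda>i j. F (r i) (c j)) r' c' n = minor F (r \<circ> r') (c \<circ> c') n"
  by (simp add: minor_def)

text \<open>The three-term identity with common block \<open>{1, \<dots>, k}\<close> and extra indices \<open>0, k + 1, k + 2\<close>:
  apply \<open>bordered_minor_three_term\<close> to \<open>G\<close> with rows and columns reordered as \<open>1, \<dots>, k, 0, k + 1, k + 2, \<dots>\<close>;
  the sign of the reordering occurs twice on the right and cancels.\<close>

lemma minor_three_term_shifted:
  fixes G :: "nat \<Rightarrow> nat \<Rightarrow> 'a::idom" and k :: nat
  defines "\<sigma> \<equiv> \<lambda>i. if i < k then Suc i else k + 2" and "\<tau> \<equiv> \<lambda>i. if i \<le> k then i else k + 2"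
  shows "lead_minor G (k + 1) * minor G Suc Suc (k + 2) - lead_minor G (k + 2) * minor G \<sigma> \<sigma> (k + 1)
       = minor G \<tau> Suc (k + 2) * minor G Suc id (k + 1) - minor G id \<tau> (k + 2) * minor G \<sigma> Suc (k + 1)"
proof -
  let ?\<rho> = "rotate_to_front k"
  define F where "F = (\<lambda>i j. G (?\<rho> i) (?\<rho> j))"
  have \<rho>1: "?\<rho> permutes {0..<Suc k}" and \<rho>2: "?\<rho> permutes {0..<k + 2}"
    by (simp_all add: rotate_to_front_permutes)
  have m2: "bordered_minor2 F k (k + 1) (k + 2) (k + 1) (k + 2) = minor G Suc Suc (k + 2)"
    and m4: "bordered_minor F k (k + 2) (k + 2) = minor G \<sigma> \<sigma> (Suc k)"
    and m8: "bordered_minor F k (k + 2) (k + 1) = minor G \<sigma> Suc (Suc k)"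
    unfolding F_def minor_reindex
    by (auto intro!: minor_cong simp: border_index_def border_index2_def rotate_to_front_def \<sigma>_def)
  have "bordered_minor F k k k = minor G (id \<circ> ?\<rho>) (id \<circ> ?\<rho>) (Suc k)"
    unfolding F_def minor_reindex by (rule minor_cong) (auto simp: border_index_def rotate_to_front_def)
  also have "\<dots> = lead_minor G (k + 1)"
    unfolding minor_permute_both[OF \<rho>1] by (simp add: minor_def)
  finally have m1: "bordered_minor F k k k = lead_minor G (k + 1)" .
  have "bordered_minor2 F k k (k + 1) k (k + 1) = minor G (id \<circ> ?\<rho>) (id \<circ> ?\<rho>) (k + 2)"
    unfolding F_def minor_reindex by (rule minor_cong) (auto simp: border_index2_def rotate_to_front_def)
  also have "\<dots> = lead_minor G (k + 2)"
    unfolding minor_permute_both[OF \<rho>2] by (simp add: minor_def)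
  finally have m3: "bordered_minor2 F k k (k + 1) k (k + 1) = lead_minor G (k + 2)" .
  have "bordered_minor2 F k k (k + 2) (k + 1) (k + 2) = minor G (\<tau> \<circ> ?\<rho>) Suc (k + 2)"
    unfolding F_def minor_reindex
    by (rule minor_cong) (auto simp: border_index2_def rotate_to_front_def \<tau>_def)
  then have m5: "bordered_minor2 F k k (k + 2) (k + 1) (k + 2) = signof ?\<rho> * minor G \<tau> Suc (k + 2)"
    by (simp only: minor_permute_rows[OF \<rho>2])
  have "bordered_minor F k (k + 1) k = minor G Suc (id \<circ> ?\<rho>) (Suc k)"
    unfolding F_def minor_reindex by (rule minor_cong) (auto simp: border_index_def rotate_to_front_def)
  then have m6: "bordered_minor F k (k + 1) k = signof ?\<rho> * minor G Suc id (Suc k)"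
    by (simp only: minor_permute_cols[OF \<rho>1])
  have "bordered_minor2 F k k (k + 1) k (k + 2) = minor G (id \<circ> ?\<rho>) (\<tau> \<circ> ?\<rho>) (k + 2)"
    unfolding F_def minor_reindex
    by (rule minor_cong) (auto simp: border_index2_def rotate_to_front_def \<tau>_def)
  then have m7: "bordered_minor2 F k k (k + 1) k (k + 2) = minor G id \<tau> (k + 2)"
    by (simp only: minor_permute_both[OF \<rho>2])
  have "signof ?\<rho> * signof ?\<rho> = (1 :: 'a)"
    by (cases ?\<rho> rule: sign_cases) auto
  then show ?thesis
    using bordered_minor_three_term[where F = F and k = k and a = k and b = "k + 1" and c = "k + 2"]
    unfolding m1 m2 m3 m4 m5 m6 m7 m8 by (simp add: algebra_simps)
qed

lemma lead_minor_shifted_rank_one_downdate: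
  fixes M :: "nat \<Rightarrow> nat \<Rightarrow> 'a::idom"
  assumes sym: "\<And>i j. M i j = M j i"
  shows "lead_minor M (k + 1) * lead_minor (\<lambda>i j. M (i + 1) (j + 1) - \<phi> (i + 1) * \<phi> (j + 1)) (k + 1)
       - lead_minor M (k + 2) * lead_minor (\<lambda>i j. M (i + 1) (j + 1) - \<phi> (i + 1) * \<phi> (j + 1)) k
     = lead_minor (\<lambda>i j. M i (j + 1) - \<phi> i * \<phi> (j + 1)) (k + 1) * lead_minor (\<lambda>i j. M i (j + 1)) (k + 1)
       - det (mat (k + 1) (k + 1) (\<lambda>(i, j). if j = k then \<phi> (i + 1) else M (i + 1) (j + 1)))
         * det (mat (k + 2) (k + 2) (\<lambda>(i, j). if j = k + 1 then \<phi> i else M i j))"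
proof -
  define G where "G = border_one M \<phi> \<phi> (k + 2)"
  let ?\<sigma> = "\<lambda>i. if i < k then Suc i else k + 2" and ?\<tau> = "\<lambda>i. if i \<le> k then i else k + 2"
  have "lead_minor G (k + 1) = lead_minor M (k + 1)"
    by (rule lead_minor_cong) (simp add: G_def border_one_def)
  moreover have "lead_minor G (k + 2) = lead_minor M (k + 2)"
    by (rule lead_minor_cong) (simp add: G_def border_one_def)
  moreover have "minor G Suc Suc (Suc (k + 1))
      = lead_minor (border_one (\<lambda>i j. M (i + 1) (j + 1)) (\<lambda>i. \<phi> (i + 1)) (\<lambda>i. \<phi> (i + 1)) (k + 1)) (Suc (k + 1))"
    by (rule minor_eq_lead_minor) (simp add: G_def border_one_def)
  moreover have "minor G ?\<sigma> ?\<sigma> (Suc k)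
      = lead_minor (border_one (\<lambda>i j. M (i + 1) (j + 1)) (\<lambda>i. \<phi> (i + 1)) (\<lambda>i. \<phi> (i + 1)) k) (Suc k)"
    by (rule minor_eq_lead_minor) (simp add: G_def border_one_def)
  moreover have "minor G ?\<tau> Suc (Suc (k + 1))
      = lead_minor (border_one (\<lambda>i j. M i (j + 1)) \<phi> (\<lambda>i. \<phi> (i + 1)) (k + 1)) (Suc (k + 1))"
    by (rule minor_eq_lead_minor) (simp add: G_def border_one_def)
  moreover have "minor G Suc id (Suc k) = lead_minor (\<lambda>i j. M i (j + 1)) (Suc k)"
    by (subst lead_minor_transpose, rule minor_eq_lead_minor) (simp add: G_def border_one_def sym)
  moreover have "minor G ?\<sigma> Suc (Suc k)
      = det (mat (Suc k) (Suc k) (\<lambda>(i, j). if j = k then \<phi> (i + 1) else M (i + 1) (j + 1)))"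
    by (subst lead_minor_transpose, rule minor_eq_lead_minor) (auto simp: G_def border_one_def sym)
  moreover have "minor G id ?\<tau> (k + 2) = det (mat (k + 2) (k + 2) (\<lambda>(i, j). if j = k + 1 then \<phi> i else M i j))"
    by (rule minor_eq_lead_minor) (auto simp: G_def border_one_def)
  ultimately show ?thesis
    using minor_three_term_shifted[where G = G and k = k] by (simp add: lead_minor_border_one)
qed

section \<open>The moments\<close>

lemma (in pair_sigma_finite) integrable_product:
  fixes u v :: "_ \<Rightarrow> real"
  assumes u: "integrable M1 u" and v: "integrable M2 v"
  shows "integrable (M1 \<Otimes>\<^sub>M M2) (\<lambda>p. u (fst p) * v (snd p))"
proof (rule Fubini_integrable)
  have [measurable]: "u \<in> borel_measurable M1" "v \<in> borel_measurable M2"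
    using u v by auto
  show "(\<lambda>p. u (fst p) * v (snd p)) \<in> borel_measurable (M1 \<Otimes>\<^sub>M M2)" by measurable
  show "integrable M1 (\<lambda>x. \<integral>y. norm (u (fst (x, y)) * v (snd (x, y))) \<partial>M2)"
    using u by (simp add: abs_mult integrable_abs)
  show "AE x in M1. integrable M2 (\<lambda>y. u (fst (x, y)) * v (snd (x, y)))"
    using v by simp
qed

lemma (in pair_sigma_finite) integral_product:
  fixes u v :: "_ \<Rightarrow> real"
  assumes u: "integrable M1 u" and v: "integrable M2 v"
  shows "(\<integral>p. u (fst p) * v (snd p) \<partial>(M1 \<Otimes>\<^sub>M M2)) = integral\<^sup>L M1 u * integral\<^sup>L M2 v"
  using integral_fst'[OF integrable_product[OF u v]] by simp

lemma
  fixes u v :: "real \<Rightarrow> real"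
  assumes u: "set_integrable lborel A u" and v: "set_integrable lborel B v"
  shows set_integrable_Times_product: "set_integrable lborel (A \<times> B) (\<lambda>p. u (fst p) * v (snd p))"
    and set_integral_Times_product:
      "(LINT p : A \<times> B | lborel. u (fst p) * v (snd p)) = (LINT x : A | lborel. u x) * (LINT y : B | lborel. v y)"
proof -
  have "integrable lborel (\<lambda>x. indicator A x * u x)" "integrable lborel (\<lambda>y. indicator B y * v y)"
    using u v unfolding set_integrable_def by simp_all
  note product = lborel_pair.integrable_product[OF this] lborel_pair.integral_product[OF this]
  have indicator: "indicator (A \<times> B) p *\<^sub>R (u (fst p) * v (snd p))
      = indicator A (fst p) * u (fst p) * (indicator B (snd p) * v (snd p))" for p :: "real \<times> real"
    by (simp add: indicator_times)
  show "set_integrable lborel (A \<times> B) (\<lambda>p. u (fst p) * v (snd p))"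
    using product(1) unfolding set_integrable_def indicator lborel_prod .
  show "(LINT p : A \<times> B | lborel. u (fst p) * v (snd p)) = (LINT x : A | lborel. u x) * (LINT y : B | lborel. v y)"
    using product(2) unfolding set_lebesgue_integral_def indicator lborel_prod by simp
qed

lemma set_integrable_powr_neg_half: "set_integrable lborel {0..1::real} (\<lambda>x. x powr (-1/2))"
proof -
  have "((\<lambda>x::real. x powr (-1/2)) has_integral (1 powr (-1/2 + 1) / (-1/2 + 1))) {0..1}"
    by (rule has_integral_powr_from_0) auto
  then have "(\<lambda>x::real. x powr (-1/2)) absolutely_integrable_on {0..1}"
    by (intro nonnegative_absolutely_integrable_1) auto
  then have "integrable lebesgue (\<lambda>x::real. indicator {0..1} x *\<^sub>R x powr (-1/2))"
    unfolding set_integrable_def .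
  moreover have "(\<lambda>x::real. indicator {0..1} x *\<^sub>R x powr (-1/2)) \<in> borel_measurable lborel"
    by measurable
  ultimately show ?thesis
    unfolding set_integrable_def using integrable_completion by blast
qed

abbreviation unit_square :: "(real \<times> real) set" where
  "unit_square \<equiv> {0<..<1} \<times> {0<..<1}"

definition mom_integrand :: "nat \<Rightarrow> nat \<Rightarrow> nat \<Rightarrow> real \<times> real \<Rightarrow> real" where
  "mom_integrand a b t p = fst p ^ a * snd p ^ b / (fst p + snd p)
      * ((1 - fst p) / (1 + fst p)) ^ t * ((1 - snd p) / (1 + snd p)) ^ t"

definition phi_integrand :: "nat \<Rightarrow> nat \<Rightarrow> real \<Rightarrow> real" where
  "phi_integrand a t x = x ^ a / (1 + x) * ((1 - x) / (1 + x)) ^ t"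

lemma mom_eq_set_integral: "mom s t i j = (LINT p : unit_square | lborel. mom_integrand (s + i) (s + j) t p)"
  unfolding mom_def mom_integrand_def ..

lemma phi_eq_set_integral: "phi s t i = sqrt 2 * (LINT x : {0<..<1} | lborel. phi_integrand (s + i) t x)"
  unfolding phi_def phi_integrand_def ..

lemma inverse_add_le_powr_neg_half:
  fixes x y :: real
  assumes "0 < x" and "0 < y"
  shows "1 / (x + y) \<le> x powr (-1/2) * y powr (-1/2)"
proof -
  have "sqrt x * sqrt y \<le> x + y"
    using arith_geo_mean_sqrt[of x y] assms by (simp add: real_sqrt_mult)
  then have "1 / (x + y) \<le> 1 / (sqrt x * sqrt y)"
    using assms by (intro divide_left_mono) auto
  also have "\<dots> = x powr (-1/2) * y powr (-1/2)"
    using assms by (simp add: powr_minus_divide powr_half_sqrt)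
  finally show ?thesis .
qed

lemma abs_mom_integrand_le:
  assumes "p \<in> unit_square"
  shows "\<bar>mom_integrand a b t p\<bar> \<le> fst p powr (-1/2) * snd p powr (-1/2)"
proof -
  obtain x y where p: "p = (x, y)" and x: "0 < x" "x < 1" and y: "0 < y" "y < 1"
    using assms by auto
  have weight: "0 \<le> (1 - z) / (1 + z) \<and> (1 - z) / (1 + z) \<le> 1" if "0 < z" "z < 1" for z :: real
    using that by (auto simp: divide_simps)
  define numerator where "numerator = x ^ a * y ^ b * ((1 - x) / (1 + x)) ^ t * ((1 - y) / (1 + y)) ^ t"
  have "0 \<le> numerator" "numerator \<le> 1"
    unfolding numerator_def using x y weight[OF x] weight[OF y]
    by (auto intro!: mult_le_one power_le_one)
  then have "\<bar>mom_integrand a b t p\<bar> \<le> 1 / (x + y)"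
    using x y by (simp add: p mom_integrand_def numerator_def[symmetric] divide_right_mono)
  also have "\<dots> \<le> fst p powr (-1/2) * snd p powr (-1/2)"
    using inverse_add_le_powr_neg_half[OF x(1) y(1)] by (simp add: p)
  finally show ?thesis .
qed

lemma mom_integrand_indicator_measurable:
  "(\<lambda>p. indicator unit_square p *\<^sub>R mom_integrand a b t p) \<in> borel_measurable (lborel \<Otimes>\<^sub>M lborel)"
proof -
  have "(\<lambda>p. indicator {0<..<1::real} (fst p) * indicator {0<..<1::real} (snd p) * mom_integrand a b t p)
      \<in> borel_measurable (lborel \<Otimes>\<^sub>M lborel)"
    unfolding mom_integrand_def by measurable
  then show ?thesis
    by (simp add: indicator_times[of "{0<..<1::real}" "{0<..<1::real}"] mult.assoc)
qed

lemma set_integrable_mom_integrand: "set_integrable lborel unit_square (mom_integrand a b t)"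
  unfolding set_integrable_def
proof (rule Bochner_Integration.integrable_bound)
  let ?U = "\<lambda>x::real. indicator {0..1} x * x powr (-1/2)"
  have "integrable lborel ?U"
    using set_integrable_powr_neg_half unfolding set_integrable_def by simp
  then show "integrable lborel (\<lambda>p. ?U (fst p) * ?U (snd p))"
    using lborel_pair.integrable_product unfolding lborel_prod by blast
  show "(\<lambda>p. indicator unit_square p *\<^sub>R mom_integrand a b t p) \<in> borel_measurable lborel"
    using mom_integrand_indicator_measurable unfolding lborel_prod .
  show "AE p in lborel. norm (indicator unit_square p *\<^sub>R mom_integrand a b t p) \<le> norm (?U (fst p) * ?U (snd p))"
  proof (rule AE_I2)
    fix p :: "real \<times> real"
    show "norm (indicator unit_square p *\<^sub>R mom_integrand a b t p) \<le> norm (?U (fst p) * ?U (snd p))"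
      using abs_mom_integrand_le[of p] by (cases "p \<in> unit_square") (auto simp: abs_mult)
  qed
qed

lemma set_integrable_phi_integrand: "set_integrable lborel {0<..<1} (phi_integrand a t)"
proof -
  have "set_integrable lborel {0..1} (phi_integrand a t)"
    unfolding set_integrable_def phi_integrand_def
    by (rule borel_integrable_compact) (auto intro!: continuous_intros)
  then show ?thesis by (rule set_integrable_subset) auto
qed

lemma mom_symmetric: "mom s t i j = mom s t j i"
proof -
  let ?f = "\<lambda>a b p. indicator unit_square p *\<^sub>R mom_integrand a b t p"
  have "(\<lambda>(x, y). ?f (s + i) (s + j) (y, x)) = ?f (s + j) (s + i)"
    by (auto simp: fun_eq_iff indicator_def mom_integrand_def add.commute)
  then have "integral\<^sup>L (lborel \<Otimes>\<^sub>M lborel) (?f (s + j) (s + i)) = integral\<^sup>L (lborel \<Otimes>\<^sub>M lborel) (?f (s + i) (s + j))"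
    using lborel_pair.integral_product_swap[OF mom_integrand_indicator_measurable[of "s + i" "s + j" t]] by simp
  then show ?thesis
    unfolding mom_eq_set_integral set_lebesgue_integral_def lborel_prod by simp
qed

text \<open>With \<open>w(x) = (1 - x) / (1 + x)\<close> one has \<open>w(x) w(y) = 1 - 2 (x + y) / ((1 + x) (1 + y))\<close>, so raising \<open>t\<close>
  cancels the singular factor \<open>1 / (x + y)\<close> from one term and leaves a product integrand.\<close>

lemma mom_integrand_Suc:
  assumes "p \<in> unit_square"
  shows "mom_integrand a b (Suc t) p
       = mom_integrand a b t p - 2 * (phi_integrand a t (fst p) * phi_integrand b t (snd p))"
proof -
  obtain x y where p: "p = (x, y)" and x: "0 < x" "x < 1" and y: "0 < y" "y < 1"
    using assms by auto
  define K where "K = x ^ a * y ^ b * ((1 - x) / (1 + x)) ^ t * ((1 - y) / (1 + y)) ^ t"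
  have weights: "(1 - x) / (1 + x) * ((1 - y) / (1 + y)) = 1 - 2 * (x + y) / ((1 + x) * (1 + y))"
    using x y by (simp add: divide_simps) (simp add: algebra_simps)
  have "mom_integrand a b (Suc t) p = K / (x + y) * ((1 - x) / (1 + x) * ((1 - y) / (1 + y)))"
    by (simp add: p mom_integrand_def K_def power_Suc2 ac_simps)
  also have "\<dots> = K / (x + y) - 2 * (K / ((1 + x) * (1 + y)))"
    unfolding weights using x y by (simp add: field_simps)
  also have "K / (x + y) = mom_integrand a b t p"
    by (simp add: p mom_integrand_def K_def)
  also have "K / ((1 + x) * (1 + y)) = phi_integrand a t (fst p) * phi_integrand b t (snd p)"
    by (simp add: p phi_integrand_def K_def)
  finally show ?thesis .
qed

lemma mom_Suc_t: "mom s (Suc t) i j = mom s t i j - phi s t i * phi s t j"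
proof -
  let ?I = "\<lambda>a. LINT x : {0<..<1} | lborel. phi_integrand a t x"
  let ?g = "\<lambda>p. phi_integrand (s + i) t (fst p) * phi_integrand (s + j) t (snd p)"
  have unit_square: "unit_square \<in> sets lborel"
    by (simp add: open_Times)
  have "mom s (Suc t) i j = (LINT p : unit_square | lborel. mom_integrand (s + i) (s + j) t p - 2 * ?g p)"
    unfolding mom_eq_set_integral by (rule set_lebesgue_integral_cong[OF unit_square]) (simp add: mom_integrand_Suc)
  also have "\<dots> = mom s t i j - 2 * (?I (s + i) * ?I (s + j))"
    using set_integrable_Times_product[OF set_integrable_phi_integrand set_integrable_phi_integrand]
      set_integral_Times_product[OF set_integrable_phi_integrand set_integrable_phi_integrand]
    by (simp add: set_integral_diff set_integrable_mult_right set_integrable_mom_integrand mom_eq_set_integral)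
  also have "\<dots> = mom s t i j - phi s t i * phi s t j"
    by (simp add: phi_eq_set_integral)
  finally show ?thesis .
qed

lemma mom_Suc_s: "mom (Suc s) t i j = mom s t (Suc i) (Suc j)"
  unfolding mom_def by simp

lemma phi_Suc_s: "phi (Suc s) t i = phi s t (Suc i)"
  unfolding phi_def by simp

theorem proposition3p3:
  fixes s t :: nat
  shows "(\<forall>n. tau s (t + 1) (n + 1) * tau s t n - tau s (t + 1) n * tau s t (n + 1)
              = - ((sigma_det s t n) ^ 2))
       \<and> (\<forall>n\<ge>1. tau s t n * tau (s + 1) (t + 1) n - tau s t (n + 1) * tau (s + 1) (t + 1) (n - 1)
              = xi s (t + 1) n * xi s t n - sigma_det (s + 1) t (n - 1) * sigma_det s t n)"
proof (intro conjI allI impI)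
  fix n :: nat
  show "tau s (t + 1) (n + 1) * tau s t n - tau s (t + 1) n * tau s t (n + 1) = - ((sigma_det s t n) ^ 2)"
    using lead_minor_rank_one_downdate[where M = "mom s t" and \<phi> = "phi s t" and n = n, OF mom_symmetric]
    by (simp add: tau_def sigma_det_def mom_Suc_t)
next
  fix n :: nat
  assume "1 \<le> n"
  then obtain k where n: "n = k + 1" by (metis le_add_diff_inverse2)
  show "tau s t n * tau (s + 1) (t + 1) n - tau s t (n + 1) * tau (s + 1) (t + 1) (n - 1)
      = xi s (t + 1) n * xi s t n - sigma_det (s + 1) t (n - 1) * sigma_det s t n"
    using lead_minor_shifted_rank_one_downdate[where M = "mom s t" and \<phi> = "phi s t" and k = k, OF mom_symmetric]
    by (simp add: n tau_def xi_def sigma_det_def mom_Suc_t mom_Suc_s phi_Suc_s cong: if_cong)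
qed

end
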